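(* Let $C\subseteq H$ be nonempty, closed and convex and take $B=N_C$ in Algorithm 3.1 (so $y_n=P_C(w_n-\lambda_nAw_n)$). (i) If Assumption 3.1 holds, then for every $p\in S$ and every $n$, $$\|y_n-\lambda_n(Ay_n-Aw_n)-p\|^2\le\|w_n-p\|^2-\Big(1-\frac{(\mu+\mu_n)^2\lambda_n^2}{\lambda_{n+1}^2}\Big)\|w_n-y_n\|^2 .$$ (ii) If Assumption 3.1 holds and $A$ is $r$-strongly pseudomonotone for some $r>0$, then for every $p\in S$ and every $n$, $$\|y_n-\lambda_n(Ay_n-Aw_n)-p\|^2\le\|w_n-p\|^2-\Big(1-\frac{(\mu+\mu_n)^2\lambda_n^2}{\lambda_{n+1}^2}\Big)\|w_n-y_n\|^2-2r\lambda_n\|y_n-p\|^2 .$$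
   Context: Let $H$ be a real Hilbert space, $A:H\to H$ a single-valued mapping and $B:H\to 2^H$ a set-valued mapping, and let $\Omega:=(A+B)^{-1}(0)=\{x\in H:\ 0\in Ax+Bx\}$. Algorithm 3.1 is the following iteration. Fix $x_0,x_1\in H$, $\mu\in(0,1)$, $\lambda_1>0$, real sequences $\{\alpha_n\},\{\beta_n\},\{\theta_n\}$ and nonnegative real sequences $\{\mu_n\},\{p_n\}$. For $n=1,2,\dots$ compute $w_n=x_n+\alpha_n(x_n-x_{n-1})$, $z_n=x_n+\beta_n(x_n-x_{n-1})$, $y_n=(I+\lambda_nB)^{-1}(I-\lambda_nA)w_n$, and set $\lambda_{n+1}=\min\{(\mu_n+\mu)\|w_n-y_n\|/\|Aw_n-Ay_n\|,\ \lambda_n+p_n\}$ if $Aw_n\neq Ay_n$, and $\lambda_{n+1}=\lambda_n+p_n$ otherwise. If $w_n=y_n$ the algorithm stops (then $y_n\in\Omega$). Otherwise set $x_{n+1}=(1-\theta_n)z_n+\theta_n\big(y_n-\lambda_n(Ay_n-Aw_n)\big)$ and continue. Here $I$ is the identity and $(I+\lambda B)^{-1}$ is the resolvent of $B$. Throughout, it is assumed that the algorithm does not stop, so that infinite sequences $\{x_n\},\{w_n\},\{z_n\},\{y_n\},\{\lambda_n\}$ are generated. $N_C(x)=\{z\in H:\langle z,y-x\rangle\le0\ \forall y\in C\}$ for $x\in C$ and $N_C(x)=\emptyset$ otherwise is the normal cone; $P_C$ is the metric projection onto $C$, and $(I+\lambda N_C)^{-1}=P_C$. $S$ denotes the solution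 set of the variational inequality VI$(A,C)$: find $x^*\in C$ with $\langle Ax^*,y-x^*\rangle\ge0$ for all $y\in C$. Assumption 3.1: (i) $S\neq\emptyset$; (ii) $A$ is pseudomonotone (i.e. $\langle Ax,y-x\rangle\ge0$ implies $\langle Ay,y-x\rangle\ge0$) and Lipschitz continuous on $H$, and whenever $x_n\rightharpoonup w^*$ weakly in $H$, one has $\|Aw^*\|\le\liminf_{n\to\infty}\|Ax_n\|$. $A$ is $r$-strongly pseudomonotone if $\langle Ay,x-y\rangle\ge0$ implies $\langle Ax,x-y\rangle\ge r\|x-y\|^2$ for all $x,y\in H$. *)

theory Defs
  imports "HOL-Analysis.Analysis"
begin

text \<open>Metric projection onto a set C in a real inner product space (the library's
  closest_point is restricted to heine_borel spaces, so we restate it generally).\<close>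
definition metric_proj :: "'a::real_inner set \<Rightarrow> 'a \<Rightarrow> 'a" where
  "metric_proj C x = (SOME y. y \<in> C \<and> (\<forall>z\<in>C. dist x y \<le> dist x z))"

definition weakly_converges :: "(nat \<Rightarrow> 'a::real_inner) \<Rightarrow> 'a \<Rightarrow> bool" where
  "weakly_converges xs x \<longleftrightarrow> (\<forall>z. (\<lambda>n. xs n \<bullet> z) \<longlonglongrightarrow> x \<bullet> z)"

definition pseudomonotone :: "('a::real_inner \<Rightarrow> 'a) \<Rightarrow> bool" where
  "pseudomonotone A \<longleftrightarrow> (\<forall>x y. A x \<bullet> (y - x) \<ge> 0 \<longrightarrow> A y \<bullet> (y - x) \<ge> 0)"

definition strongly_pseudomonotone :: "real \<Rightarrow> ('a::real_inner \<Rightarrow> 'a) \<Rightarrow> bool" where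
  "strongly_pseudomonotone r A \<longleftrightarrow>
     (\<forall>x y. A y \<bullet> (x - y) \<ge> 0 \<longrightarrow> A x \<bullet> (x - y) \<ge> r * (norm (x - y))\<^sup>2)"

definition VI_sol :: "('a::real_inner \<Rightarrow> 'a) \<Rightarrow> 'a set \<Rightarrow> 'a set" where
  "VI_sol A C = {x \<in> C. \<forall>y\<in>C. A x \<bullet> (y - x) \<ge> 0}"

end

theory Submission
  imports Defs
begin

text \<open>Expanding \<open>\<parallel>y - \<lambda>(Ay - Aw) - p\<parallel>\<^sup>2\<close> and using the variational characterisation of the
  projection \<open>y = P\<^sub>C(w - \<lambda>Aw)\<close> bounds it by \<open>\<parallel>w - p\<parallel>\<^sup>2 - \<parallel>w - y\<parallel>\<^sup>2 + \<lambda>\<^sup>2\<parallel>Ay - Aw\<parallel>\<^sup>2 - 2\<lambda>\<langle>Ay, y - p\<rangle>\<close>.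
  The step-size rule gives \<open>\<lambda>\<^sub>n\<^sub>+\<^sub>1\<parallel>Ay\<^sub>n - Aw\<^sub>n\<parallel> \<le> (\<mu> + \<mu>\<^sub>n)\<parallel>w\<^sub>n - y\<^sub>n\<parallel>\<close>, and for \<open>p \<in> S\<close> we have
  \<open>\<langle>Ap, y\<^sub>n - p\<rangle> \<ge> 0\<close> because \<open>y\<^sub>n \<in> C\<close>, so (strong) pseudomonotonicity controls the last term.
  Existence of nearest points in a general Hilbert space is obtained from a minimising sequence,
  which is Cauchy by the parallelogram law.\<close>

lemma parallelogram_law_midpoint:
  fixes a u v :: "'a::real_inner"
  shows "(dist u v)\<^sup>2 = 2 * (dist a u)\<^sup>2 + 2 * (dist a v)\<^sup>2 - 4 * (dist a (midpoint u v))\<^sup>2"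
  by (simp add: dist_norm midpoint_def power2_norm_eq_inner inner_add_left inner_add_right
      inner_diff_left inner_diff_right inner_commute algebra_simps)

lemma midpoint_in_convex:
  assumes "convex S" "u \<in> S" "v \<in> S"
  shows "midpoint u v \<in> S"
  using convexD[OF assms, of "1/2" "1/2"] by (simp add: midpoint_def scaleR_right_distrib)

lemma nearest_point_exists:
  fixes a :: "'a::{real_inner,complete_space}"
  assumes S: "S \<noteq> {}" "closed S" "convex S"
  obtains y where "y \<in> S" "\<And>z. z \<in> S \<Longrightarrow> dist a y \<le> dist a z"
proof -
  define d where "d = infdist a S"
  have d_le: "d \<le> dist a z" if "z \<in> S" for z
    using that unfolding d_def by (rule infdist_le)
  have "\<exists>c\<in>S. (dist a c)\<^sup>2 < d\<^sup>2 + 1 / real (Suc k)" for k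
  proof -
    have "infdist a S < sqrt (d\<^sup>2 + 1 / real (Suc k))"
      using infdist_nonneg[of a S] unfolding d_def by (simp add: real_less_rsqrt)
    then obtain c where "c \<in> S" "dist a c < sqrt (d\<^sup>2 + 1 / real (Suc k))"
      using S(1) by (auto simp: infdist_notempty cINF_less_iff)
    then show ?thesis
      by (metis real_sqrt_less_iff zero_le_dist real_sqrt_abs abs_of_nonneg)
  qed
  then obtain c where c_in: "\<And>k. c k \<in> S"
    and c_dist: "\<And>k. (dist a (c k))\<^sup>2 < d\<^sup>2 + 1 / real (Suc k)"
    by metis
  have c_close: "(dist (c k) (c m))\<^sup>2 \<le> 2 / real (Suc k) + 2 / real (Suc m)" for k m
  proof -
    have "d\<^sup>2 \<le> (dist a (midpoint (c k) (c m)))\<^sup>2"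
      using d_le[OF midpoint_in_convex[OF S(3) c_in c_in]] infdist_nonneg[of a S]
      unfolding d_def by (intro power_mono) auto
    then show ?thesis
      using parallelogram_law_midpoint[of "c k" "c m" a] c_dist[of k] c_dist[of m] by linarith
  qed
  have "Cauchy c"
  proof (rule metric_CauchyI)
    fix e :: real assume "e > 0"
    then obtain N :: nat where N: "4 / e\<^sup>2 < real (Suc N)"
      using reals_Archimedean2 less_Suc_eq by (metis less_trans of_nat_less_iff)
    show "\<exists>M. \<forall>k\<ge>M. \<forall>m\<ge>M. dist (c k) (c m) < e"
    proof (intro exI allI impI)
      fix k m assume "N \<le> k" "N \<le> m"
      then have "2 / real (Suc k) + 2 / real (Suc m) \<le> 4 / real (Suc N)"
        using frac_le[of 2 2 "real (Suc N)" "real (Suc k)"] frac_le[of 2 2 "real (Suc N)" "real (Suc m)"]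
        by simp
      also have "\<dots> < e\<^sup>2"
        using N \<open>e > 0\<close> by (simp add: field_simps)
      finally have "(dist (c k) (c m))\<^sup>2 < e\<^sup>2"
        using c_close[of k m] by linarith
      then show "dist (c k) (c m) < e"
        using \<open>e > 0\<close> by (simp add: power_less_imp_less_base)
    qed
  qed
  then obtain y where y: "c \<longlonglongrightarrow> y"
    using Cauchy_convergent_iff convergent_def by blast
  have "y \<in> S"
    using S(2) c_in y closed_sequentially by blast
  have "(\<lambda>k. (dist a (c k))\<^sup>2) \<longlonglongrightarrow> (dist a y)\<^sup>2"
    using y by (intro tendsto_intros)
  moreover have "(\<lambda>k. d\<^sup>2 + 1 / real (Suc k)) \<longlonglongrightarrow> d\<^sup>2"
    using tendsto_add[OF tendsto_const LIMSEQ_inverse_real_of_nat] by (simp add: inverse_eq_divide)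
  ultimately have "(dist a y)\<^sup>2 \<le> d\<^sup>2"
    using c_dist by (intro LIMSEQ_le) (auto intro: less_imp_le)
  then have "dist a y \<le> d"
    using infdist_nonneg[of a S] unfolding d_def by (simp add: power2_le_iff_abs_le)
  with \<open>y \<in> S\<close> d_le that show ?thesis
    by (meson order_trans)
qed

lemma metric_proj_nearest:
  fixes a :: "'a::{real_inner,complete_space}"
  assumes "C \<noteq> {}" "closed C" "convex C"
  shows "metric_proj C a \<in> C \<and> (\<forall>z\<in>C. dist a (metric_proj C a) \<le> dist a z)"
  unfolding metric_proj_def
  by (rule someI_ex) (metis nearest_point_exists[OF assms])

lemma metric_proj_in:
  fixes a :: "'a::{real_inner,complete_space}"
  assumes "C \<noteq> {}" "closed C" "convex C"
  shows "metric_proj C a \<in> C"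
  using metric_proj_nearest[OF assms] by blast

lemma metric_proj_variational_ineq:
  fixes a :: "'a::{real_inner,complete_space}"
  assumes "C \<noteq> {}" "closed C" "convex C" "p \<in> C"
  shows "(a - metric_proj C a) \<bullet> (p - metric_proj C a) \<le> 0"
  using any_closest_point_dot[OF assms(3,2)] metric_proj_nearest[OF assms(1-3)] assms(4) by blast

lemma adaptive_step_sizes_pos:
  fixes a b :: "nat \<Rightarrow> 'a::real_normed_vector"
  assumes "lam 1 > 0" "\<And>n. ps n \<ge> 0" "\<And>n. n \<ge> 1 \<Longrightarrow> c n > 0"
    and upd: "\<And>n. n \<ge> 1 \<Longrightarrow> lam (Suc n) =
        (if a n \<noteq> b n then min (c n / norm (a n - b n)) (lam n + ps n) else lam n + ps n)"
    and "n \<ge> 1"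
  shows "lam n > 0"
  using \<open>n \<ge> 1\<close>
proof (induction n rule: dec_induct)
  case base
  show ?case using assms(1) by simp
next
  case (step n)
  have "lam n + ps n > 0" using step.IH assms(2)[of n] by linarith
  with upd[OF step.hyps(1)] assms(3)[OF step.hyps(1)] show ?case by simp
qed

lemma tseng_step_estimate:
  fixes w y p u v :: "'a::real_inner"
  assumes "(w - l *\<^sub>R u - y) \<bullet> (p - y) \<le> 0"
  shows "(norm (y - l *\<^sub>R (v - u) - p))\<^sup>2
           \<le> (norm (w - p))\<^sup>2 - (norm (w - y))\<^sup>2 + l\<^sup>2 * (norm (v - u))\<^sup>2 - 2 * l * (v \<bullet> (y - p))"
proof -
  have "(norm (y - l *\<^sub>R (v - u) - p))\<^sup>2
      = (norm (w - p))\<^sup>2 - (norm (w - y))\<^sup>2 + l\<^sup>2 * (norm (v - u))\<^sup>2 - 2 * l * (v \<bullet> (y - p))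
        + 2 * ((w - l *\<^sub>R u - y) \<bullet> (p - y))"
    unfolding power2_norm_eq_inner
    by (simp add: inner_add_left inner_add_right inner_diff_left inner_diff_right
        inner_commute algebra_simps power2_eq_square)
  with assms show ?thesis by linarith
qed

lemma adaptive_step_size_bound:
  fixes a b :: "'a::real_normed_vector"
  assumes lam': "lam' = (if a \<noteq> b then min (k * d / norm (a - b)) l else l)"
    and "lam' > 0" "0 \<le> k * d"
  shows "lam\<^sup>2 * (norm (b - a))\<^sup>2 \<le> k\<^sup>2 * lam\<^sup>2 / lam'\<^sup>2 * d\<^sup>2"
proof -
  have "lam' * norm (b - a) \<le> k * d"
    using lam' assms(3) by (cases "a = b") (auto simp: field_simps norm_minus_commute min_def split: if_splits)
  then have "norm (b - a) \<le> k * d / lam'"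
    using \<open>lam' > 0\<close> by (simp add: field_simps)
  then have "(norm (b - a))\<^sup>2 \<le> (k * d / lam')\<^sup>2"
    by (intro power_mono) auto
  then have "lam\<^sup>2 * (norm (b - a))\<^sup>2 \<le> lam\<^sup>2 * (k * d / lam')\<^sup>2"
    by (intro mult_left_mono) auto
  then show ?thesis
    by (simp add: power_divide power_mult_distrib mult_ac)
qed

lemma projected_tseng_step_estimate:
  fixes A :: "'a::{real_inner,complete_space} \<Rightarrow> 'a"
  assumes C: "C \<noteq> {}" "closed C" "convex C" and "p \<in> C"
    and y: "y = metric_proj C (w - l *\<^sub>R A w)"
    and l': "l' = (if A w \<noteq> A y then min (k * norm (w - y) / norm (A w - A y)) l\<^sub>0 else l\<^sub>0)"
    and "l' > 0" "k \<ge> 0"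
  shows "(norm (y - l *\<^sub>R (A y - A w) - p))\<^sup>2
           \<le> (norm (w - p))\<^sup>2 - (1 - k\<^sup>2 * l\<^sup>2 / l'\<^sup>2) * (norm (w - y))\<^sup>2 - 2 * l * (A y \<bullet> (y - p))"
proof -
  have "(w - l *\<^sub>R A w - y) \<bullet> (p - y) \<le> 0"
    using metric_proj_variational_ineq[OF C \<open>p \<in> C\<close>] y by simp
  from tseng_step_estimate[OF this, of "A y"]
    adaptive_step_size_bound[OF l' \<open>l' > 0\<close>, of l] \<open>k \<ge> 0\<close>
    left_diff_distrib[of 1 "k\<^sup>2 * l\<^sup>2 / l'\<^sup>2" "(norm (w - y))\<^sup>2"]
  show ?thesis
    by simp
qed

theorem proposition3p1:
  fixes A :: "'a::{real_inner, complete_space} \<Rightarrow> 'a"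
    and C :: "'a set"
    and x w z y :: "nat \<Rightarrow> 'a"
    and lam alpha beta theta mus ps :: "nat \<Rightarrow> real"
    and mu :: real
  assumes C: "C \<noteq> {}" "closed C" "convex C"
    and mu: "0 < mu" "mu < 1"
    and lam1: "lam 1 > 0"
    and mus_nonneg: "\<And>n. mus n \<ge> 0"
    and ps_nonneg: "\<And>n. ps n \<ge> 0"
    and w_def: "\<And>n. n \<ge> 1 \<Longrightarrow> w n = x n + alpha n *\<^sub>R (x n - x (n - 1))"
    and z_def: "\<And>n. n \<ge> 1 \<Longrightarrow> z n = x n + beta n *\<^sub>R (x n - x (n - 1))"
    and y_def: "\<And>n. n \<ge> 1 \<Longrightarrow> y n = metric_proj C (w n - lam n *\<^sub>R A (w n))"
    and lam_upd: "\<And>n. n \<ge> 1 \<Longrightarrow> lam (Suc n) =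
        (if A (w n) \<noteq> A (y n)
         then min ((mus n + mu) * norm (w n - y n) / norm (A (w n) - A (y n))) (lam n + ps n)
         else lam n + ps n)"
    and nostop: "\<And>n. n \<ge> 1 \<Longrightarrow> w n \<noteq> y n"
    and x_upd: "\<And>n. n \<ge> 1 \<Longrightarrow> x (Suc n) =
        (1 - theta n) *\<^sub>R z n + theta n *\<^sub>R (y n - lam n *\<^sub>R (A (y n) - A (w n)))"
    and S_ne: "VI_sol A C \<noteq> {}"
    and pm: "pseudomonotone A"
    and lip: "\<exists>L. L-lipschitz_on UNIV A"
    and wlsc: "\<And>xs u. weakly_converges xs u \<Longrightarrow> norm (A u) \<le> liminf (\<lambda>n. ereal (norm (A (xs n))))"
  shows "(\<forall>p\<in>VI_sol A C. \<forall>n\<ge>1.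
            (norm (y n - lam n *\<^sub>R (A (y n) - A (w n)) - p))\<^sup>2
              \<le> (norm (w n - p))\<^sup>2
                 - (1 - (mu + mus n)\<^sup>2 * (lam n)\<^sup>2 / (lam (Suc n))\<^sup>2) * (norm (w n - y n))\<^sup>2)
       \<and> (\<forall>r>0. strongly_pseudomonotone r A \<longrightarrow>
            (\<forall>p\<in>VI_sol A C. \<forall>n\<ge>1.
              (norm (y n - lam n *\<^sub>R (A (y n) - A (w n)) - p))\<^sup>2
                \<le> (norm (w n - p))\<^sup>2
                   - (1 - (mu + mus n)\<^sup>2 * (lam n)\<^sup>2 / (lam (Suc n))\<^sup>2) * (norm (w n - y n))\<^sup>2
                   - 2 * r * lam n * (norm (y n - p))\<^sup>2))"
proof -
  have lam_pos: "lam n > 0" if "n \<ge> 1" for n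
  proof (rule adaptive_step_sizes_pos[OF lam1 ps_nonneg _ lam_upd that])
    fix m :: nat assume "m \<ge> 1"
    then have "norm (w m - y m) > 0" using nostop by simp
    moreover have "mus m + mu > 0" using mus_nonneg[of m] mu(1) by linarith
    ultimately show "(mus m + mu) * norm (w m - y m) > 0" by simp
  qed
  have estimate: "(norm (y n - lam n *\<^sub>R (A (y n) - A (w n)) - p))\<^sup>2
      \<le> (norm (w n - p))\<^sup>2 - (1 - (mu + mus n)\<^sup>2 * (lam n)\<^sup>2 / (lam (Suc n))\<^sup>2) * (norm (w n - y n))\<^sup>2
         - 2 * lam n * (A (y n) \<bullet> (y n - p))"
    and Ap_nonneg: "A p \<bullet> (y n - p) \<ge> 0"
    if p: "p \<in> VI_sol A C" and n: "n \<ge> 1" for p n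
  proof -
    have "p \<in> C" using p by (simp add: VI_sol_def)
    have "mus n + mu \<ge> 0" using mus_nonneg[of n] mu(1) by linarith
    from projected_tseng_step_estimate[OF C \<open>p \<in> C\<close> y_def[OF n] lam_upd[OF n] lam_pos this] n
    show "(norm (y n - lam n *\<^sub>R (A (y n) - A (w n)) - p))\<^sup>2
      \<le> (norm (w n - p))\<^sup>2 - (1 - (mu + mus n)\<^sup>2 * (lam n)\<^sup>2 / (lam (Suc n))\<^sup>2) * (norm (w n - y n))\<^sup>2
         - 2 * lam n * (A (y n) \<bullet> (y n - p))"
      by (simp add: add.commute)
    show "A p \<bullet> (y n - p) \<ge> 0"
      using p metric_proj_in[OF C] y_def[OF n] by (simp add: VI_sol_def)
  qed
  show ?thesis
  proof (intro conjI allI impI ballI)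
    fix p and n :: nat assume "p \<in> VI_sol A C" "n \<ge> 1"
    with pm Ap_nonneg have "A (y n) \<bullet> (y n - p) \<ge> 0"
      unfolding pseudomonotone_def by blast
    with lam_pos[OF \<open>n \<ge> 1\<close>] have "2 * lam n * (A (y n) \<bullet> (y n - p)) \<ge> 0"
      by simp
    with estimate[OF \<open>p \<in> VI_sol A C\<close> \<open>n \<ge> 1\<close>]
    show "(norm (y n - lam n *\<^sub>R (A (y n) - A (w n)) - p))\<^sup>2
        \<le> (norm (w n - p))\<^sup>2
           - (1 - (mu + mus n)\<^sup>2 * (lam n)\<^sup>2 / (lam (Suc n))\<^sup>2) * (norm (w n - y n))\<^sup>2"
      by linarith
  next
    fix r :: real and p and n :: nat
    assume "strongly_pseudomonotone r A" "p \<in> VI_sol A C" "n \<ge> 1"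
    with Ap_nonneg have "A (y n) \<bullet> (y n - p) \<ge> r * (norm (y n - p))\<^sup>2"
      unfolding strongly_pseudomonotone_def by blast
    with lam_pos[OF \<open>n \<ge> 1\<close>]
    have "2 * r * lam n * (norm (y n - p))\<^sup>2 \<le> 2 * lam n * (A (y n) \<bullet> (y n - p))"
      by (simp add: mult.assoc mult.left_commute[of r])
    with estimate[OF \<open>p \<in> VI_sol A C\<close> \<open>n \<ge> 1\<close>]
    show "(norm (y n - lam n *\<^sub>R (A (y n) - A (w n)) - p))\<^sup>2
        \<le> (norm (w n - p))\<^sup>2
           - (1 - (mu + mus n)\<^sup>2 * (lam n)\<^sup>2 / (lam (Suc n))\<^sup>2) * (norm (w n - y n))\<^sup>2
           - 2 * r * lam n * (norm (y n - p))\<^sup>2"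
      by linarith
  qed
qed

end
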